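(* The syntactic pomset automaton $A_\Sigma$ is fork-acyclic.
   Context: Fix a finite alphabet $\Sigma$. The set $\mathcal{T}$ of sr-expressions is generated by $e, f ::= 0 \mid 1 \mid \mathtt{a}\in\Sigma \mid e+f \mid e\cdot f \mid e\parallel f \mid e^*$. $\mathcal{F}\subseteq\mathcal{T}$ is the smallest set with $1\in\mathcal{F}$; $e+f\in\mathcal{F}$ if $e\in\mathcal{F}$ or $f\in\mathcal{F}$; $e\cdot f, e\parallel f\in\mathcal{F}$ if $e,f\in\mathcal{F}$; and $e^*\in\mathcal{F}$ for all $e$. A pomset automaton (PA) is a tuple $\langle Q,F,\delta,\gamma\rangle$ with states $Q$, accepting states $F\subseteq Q$, $\delta: Q\times\Sigma\to 2^Q$ and $\gamma: Q\times\mathbb{M}(Q)\to 2^Q$ (with $\mathbb{M}(Q)$ the finite multisets over $Q$), such that for each $q$ only finitely many $\phi$ have $\gamma(q,\phi)\neq\emptyset$. The support relation $\preceq$ is the smallest preorder on $Q$ with $q'\preceq q$ whenever $q'\in\delta(q,\mathtt a)$ for some $\mathtt a$, or $q'\in\gamma(q,\phi)$ for some $\phi$, or $q'\in\phi$ for some $\phi$ with $\gamma(q,\phi)\neq\emptyset$. Write $q'\prec q$ if $q'\preceq q$ and $q\not\preceq q'$. The PA is fork-acyclic if whenever $r\in\phi$ and $\gamma(q,\phi)\neq\emptyset$, we have $r\prec q$. For $e\in\mathcal{T}$ and $T\subseteq\mathcal{T}$, let $e\star T = T$ if $e\in\mathcal{F}$ and $\emptyset$ otherwise. The derivatives $\delta_\Sigma:\mathcal{T}\times\Sigma\to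 2^{\mathcal{T}}$ and $\gamma_\Sigma:\mathcal{T}\times\mathbb{M}(\mathcal{T})\to 2^{\mathcal{T}}$ are defined by: $\delta_\Sigma(0,\mathtt a)=\delta_\Sigma(1,\mathtt a)=\emptyset$; $\delta_\Sigma(\mathtt b,\mathtt a)=\{1 : \mathtt a=\mathtt b\}$; $\delta_\Sigma(e+f,\mathtt a)=\delta_\Sigma(e,\mathtt a)\cup\delta_\Sigma(f,\mathtt a)$; $\delta_\Sigma(e\cdot f,\mathtt a)=\{g\cdot f : g\in\delta_\Sigma(e,\mathtt a)\}\cup e\star\delta_\Sigma(f,\mathtt a)$; $\delta_\Sigma(e\parallel f,\mathtt a)=\emptyset$; $\delta_\Sigma(e^*,\mathtt a)=\{g\cdot e^* : g\in\delta_\Sigma(e,\mathtt a)\}$; and $\gamma_\Sigma(0,\phi)=\gamma_\Sigma(1,\phi)=\gamma_\Sigma(\mathtt b,\phi)=\emptyset$; $\gamma_\Sigma(e+f,\phi)=\gamma_\Sigma(e,\phi)\cup\gamma_\Sigma(f,\phi)$; $\gamma_\Sigma(e\cdot f,\phi)=\{g\cdot f: g\in\gamma_\Sigma(e,\phi)\}\cup e\star\gamma_\Sigma(f,\phi)$; $\gamma_\Sigma(e\parallel f,\phi)=\{1 : \phi=\{\!\{e,f\}\!\}\}$; $\gamma_\Sigma(e^*,\phi)=\{g\cdot e^* : g\in\gamma_\Sigma(e,\phi)\}$. The syntactic PA is $A_\Sigma=\langle\mathcal{T},\mathcal{F},\delta_\Sigma,\gamma_\Sigma\rangle$. *)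

theory Defs
  imports Main "HOL-Library.Multiset"
begin

datatype 'a sr = Zero | One | Sym 'a | Plus "'a sr" "'a sr" | Seq "'a sr" "'a sr"
  | Par "'a sr" "'a sr" | Star "'a sr"

inductive_set FF :: "'a sr set" where
  one: "One \<in> FF"
| plusL: "e \<in> FF \<Longrightarrow> Plus e f \<in> FF"
| plusR: "f \<in> FF \<Longrightarrow> Plus e f \<in> FF"
| seq: "e \<in> FF \<Longrightarrow> f \<in> FF \<Longrightarrow> Seq e f \<in> FF"
| par: "e \<in> FF \<Longrightarrow> f \<in> FF \<Longrightarrow> Par e f \<in> FF"
| star: "Star e \<in> FF"

definition starF :: "'a sr \<Rightarrow> 'a sr set \<Rightarrow> 'a sr set" where
  "starF e T = (if e \<in> FF then T else {})"

fun delta_S :: "'a sr \<Rightarrow> 'a \<Rightarrow> 'a sr set" where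
  "delta_S Zero a = {}"
| "delta_S One a = {}"
| "delta_S (Sym b) a = (if a = b then {One} else {})"
| "delta_S (Plus e f) a = delta_S e a \<union> delta_S f a"
| "delta_S (Seq e f) a = {Seq g f | g. g \<in> delta_S e a} \<union> starF e (delta_S f a)"
| "delta_S (Par e f) a = {}"
| "delta_S (Star e) a = {Seq g (Star e) | g. g \<in> delta_S e a}"

fun gamma_S :: "'a sr \<Rightarrow> 'a sr multiset \<Rightarrow> 'a sr set" where
  "gamma_S Zero \<phi> = {}"
| "gamma_S One \<phi> = {}"
| "gamma_S (Sym b) \<phi> = {}"
| "gamma_S (Plus e f) \<phi> = gamma_S e \<phi> \<union> gamma_S f \<phi>"
| "gamma_S (Seq e f) \<phi> = {Seq g f | g. g \<in> gamma_S e \<phi>} \<union> starF e (gamma_S f \<phi>)"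
| "gamma_S (Par e f) \<phi> = (if \<phi> = {#e, f#} then {One} else {})"
| "gamma_S (Star e) \<phi> = {Seq g (Star e) | g. g \<in> gamma_S e \<phi>}"

text \<open>Pomset automata with state type 'q (the state set Q is the whole type)\<close>
record ('q, 'a) pa =
  acc :: "'q set"
  trans :: "'q \<Rightarrow> 'a \<Rightarrow> 'q set"
  fork :: "'q \<Rightarrow> 'q multiset \<Rightarrow> 'q set"

definition is_pa :: "('q, 'a) pa \<Rightarrow> bool" where
  "is_pa A \<longleftrightarrow> (\<forall>q. finite {\<phi>. fork A q \<phi> \<noteq> {}})"

text \<open>support relation: smallest preorder containing the basic steps; supp A q' q means q' \<preceq> q\<close>
inductive supp :: "('q, 'a) pa \<Rightarrow> 'q \<Rightarrow> 'q \<Rightarrow> bool" for A where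
  refl: "supp A q q"
| trans_step: "supp A q1 q2 \<Longrightarrow> supp A q2 q3 \<Longrightarrow> supp A q1 q3"
| delta_step: "q' \<in> trans A q a \<Longrightarrow> supp A q' q"
| gamma_step: "q' \<in> fork A q \<phi> \<Longrightarrow> supp A q' q"
| fork_step: "q' \<in># \<phi> \<Longrightarrow> fork A q \<phi> \<noteq> {} \<Longrightarrow> supp A q' q"

definition strict_supp :: "('q, 'a) pa \<Rightarrow> 'q \<Rightarrow> 'q \<Rightarrow> bool" where
  "strict_supp A q' q \<longleftrightarrow> supp A q' q \<and> \<not> supp A q q'"

definition fork_acyclic :: "('q, 'a) pa \<Rightarrow> bool" where
  "fork_acyclic A \<longleftrightarrow> (\<forall>q \<phi> r. r \<in># \<phi> \<and> fork A q \<phi> \<noteq> {} \<longrightarrow> strict_supp A r q)"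

definition syntactic_pa :: "('a sr, 'a) pa" where
  "syntactic_pa = \<lparr>acc = FF, trans = delta_S, fork = gamma_S\<rparr>"

end

theory Submission
  imports Defs
begin

text \<open>A rank on states that never increases along transitions and fork targets, and drops
  strictly from a state to the members of any multiset it forks on, is monotone along the
  support preorder; so a member of a fork multiset can never support the forking state.
  For the syntactic PA the rank is the nesting depth of parallel composition: derivatives
  only discard subterms or re-wrap them in sequential contexts, while the only forks are
  those of a term \<open>e \<parallel> f\<close> on its two components.\<close>

lemma supp_rank_le:
  fixes rank :: "'q \<Rightarrow> 'b::preorder"
  assumes trans_le: "\<And>q a q'. q' \<in> trans A q a \<Longrightarrow> rank q' \<le> rank q"
    and fork_le: "\<And>q \<phi> q'. q' \<in> fork A q \<phi> \<Longrightarrow> rank q' \<le> rank q"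
    and fork_child_less: "\<And>q \<phi> r. r \<in># \<phi> \<Longrightarrow> fork A q \<phi> \<noteq> {} \<Longrightarrow> rank r < rank q"
    and "supp A r q"
  shows "rank r \<le> rank q"
  using \<open>supp A r q\<close>
proof induction
  case (trans_step q1 q2 q3)
  from trans_step.IH show ?case by (rule order_trans)
qed (auto intro: less_imp_le trans_le fork_le fork_child_less)

lemma fork_acyclic_by_rank:
  fixes rank :: "'q \<Rightarrow> 'b::preorder"
  assumes "\<And>q a q'. q' \<in> trans A q a \<Longrightarrow> rank q' \<le> rank q"
    and "\<And>q \<phi> q'. q' \<in> fork A q \<phi> \<Longrightarrow> rank q' \<le> rank q"
    and "\<And>q \<phi> r. r \<in># \<phi> \<Longrightarrow> fork A q \<phi> \<noteq> {} \<Longrightarrow> rank r < rank q"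
  shows "fork_acyclic A"
  unfolding fork_acyclic_def strict_supp_def
proof (intro allI impI conjI)
  fix q \<phi> r
  assume fork: "r \<in># \<phi> \<and> fork A q \<phi> \<noteq> {}"
  then show "supp A r q"
    by (blast intro: supp.fork_step)
  have "rank r < rank q"
    using fork assms(3) by blast
  show "\<not> supp A q r"
  proof
    assume "supp A q r"
    with assms have "rank q \<le> rank r"
      by (rule supp_rank_le)
    with \<open>rank r < rank q\<close> show False
      by (simp add: less_le_not_le)
  qed
qed

fun par_depth :: "'a sr \<Rightarrow> nat" where
  "par_depth Zero = 0"
| "par_depth One = 0"
| "par_depth (Sym b) = 0"
| "par_depth (Plus e f) = max (par_depth e) (par_depth f)"
| "par_depth (Seq e f) = max (par_depth e) (par_depth f)"
| "par_depth (Par e f) = Suc (max (par_depth e) (par_depth f))"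
| "par_depth (Star e) = par_depth e"

lemma par_depth_delta_S_le: "g \<in> delta_S e a \<Longrightarrow> par_depth g \<le> par_depth e"
  by (induction e arbitrary: g) (fastforce simp: starF_def split: if_splits)+

lemma par_depth_gamma_S_le: "g \<in> gamma_S e \<phi> \<Longrightarrow> par_depth g \<le> par_depth e"
  by (induction e arbitrary: g) (fastforce simp: starF_def split: if_splits)+

lemma par_depth_gamma_S_child_less:
  "gamma_S e \<phi> \<noteq> {} \<Longrightarrow> r \<in># \<phi> \<Longrightarrow> par_depth r < par_depth e"
  by (induction e) (auto simp: starF_def less_max_iff_disj split: if_splits)

theorem lemma7p14:
  shows "fork_acyclic (syntactic_pa :: ('a::finite sr, 'a) pa)"
  unfolding syntactic_pa_def
  by (rule fork_acyclic_by_rank[where rank = par_depth])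
    (simp_all add: par_depth_delta_S_le par_depth_gamma_S_le par_depth_gamma_S_child_less)

end
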